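(* Let $C\subset\mathbb{R}^d$ be a convex body and let $\Lambda\subset\mathbb{R}^d$ be a $d$-dimensional lattice. The following are equivalent: (1) $C$ is lattice reduced with respect to $\Lambda$; (2) for every exposed point $p$ of $C$ there exists a width direction $y\in\Lambda^\star$ of $C$ such that $y\cdot p>y\cdot x$ for all $x\in C\setminus\{p\}$.
   Context: A convex body is a compact convex set with non-empty interior. An exposed point of $C$ is a point $p$ such that $C\cap H=\{p\}$ for some supporting hyperplane $H$ of $C$. A lattice $\Lambda\subset\mathbb{R}^d$ is a discrete subgroup spanning $\mathbb{R}^d$; $\Lambda^\star=\{y: x\cdot y\in\mathbb{Z}\ \forall x\in\Lambda\}$. The lattice width is $\mathrm{wdt}_\Lambda(C)=\min_{y\in\Lambda^\star\setminus\{0\}}\max_{a,b\in C}y\cdot(a-b)$; a width direction is a $y\in\Lambda^\star\setminus\{0\}$ attaining this minimum. $C$ is lattice reduced if no convex body $C'\subsetneq C$ has $\mathrm{wdt}_\Lambda(C')=\mathrm{wdt}_\Lambda(C)$. *)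

theory Defs
  imports "HOL-Analysis.Analysis"
begin

definition convex_body :: "'a::euclidean_space set \<Rightarrow> bool" where
  "convex_body C \<longleftrightarrow> compact C \<and> convex C \<and> interior C \<noteq> {}"

definition is_lattice :: "'a::euclidean_space set \<Rightarrow> bool" where
  "is_lattice L \<longleftrightarrow> 0 \<in> L \<and> (\<forall>x\<in>L. \<forall>y\<in>L. x - y \<in> L)
     \<and> (\<exists>e>0. \<forall>x\<in>L. norm x < e \<longrightarrow> x = 0) \<and> span L = UNIV"

definition dual_lattice :: "'a::euclidean_space set \<Rightarrow> 'a set" where
  "dual_lattice L = {y. \<forall>x\<in>L. x \<bullet> y \<in> \<int>}"

definition width_in_dir :: "'a::euclidean_space set \<Rightarrow> 'a \<Rightarrow> real" where
  "width_in_dir C y = Sup {y \<bullet> (a - b) | a b. a \<in> C \<and> b \<in> C}"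

definition lattice_width :: "'a::euclidean_space set \<Rightarrow> 'a set \<Rightarrow> real" where
  "lattice_width L C = Inf (width_in_dir C ` (dual_lattice L - {0}))"

definition width_direction :: "'a::euclidean_space set \<Rightarrow> 'a set \<Rightarrow> 'a \<Rightarrow> bool" where
  "width_direction L C y \<longleftrightarrow> y \<in> dual_lattice L - {0} \<and> width_in_dir C y = lattice_width L C"

definition lattice_reduced :: "'a::euclidean_space set \<Rightarrow> 'a set \<Rightarrow> bool" where
  "lattice_reduced L C \<longleftrightarrow>
     \<not> (\<exists>C'. convex_body C' \<and> C' \<subset> C \<and> lattice_width L C' = lattice_width L C)"

end

theory Submission
  imports Defs
begin

text \<open>
  Suppose \<open>C\<close> is lattice reduced, \<open>p\<close> is an exposed point, and no width direction is
  uniquely maximised at \<open>p\<close>. Applying this to \<open>y\<close> and \<open>-y\<close> shows that the width of \<open>C\<close> in each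
  of the finitely many width directions is attained by two points other than \<open>p\<close>. Cutting off
  a thin cap of \<open>C\<close> at \<open>p\<close> keeps all these witness pairs, and the truncated body still contains
  the homothetic copy of \<open>C\<close> with ratio \<open>m / w\<close>, where \<open>m\<close> is the lattice width and \<open>w > m\<close>
  bounds the widths in all other dual directions from below. So the truncated body has lattice
  width \<open>m\<close>, a contradiction. Conversely, if \<open>C' \<subset> C\<close> is a convex body, some exposed point
  \<open>p\<close> of \<open>C\<close> lies outside \<open>C'\<close> (the farthest point of \<open>C\<close> from a suitable far away point),
  and a width direction of \<open>C\<close> uniquely maximised at \<open>p\<close> gives \<open>C'\<close> a smaller width.
\<close>

section \<open>Width in a fixed direction\<close>

lemma compact_inner_differences:
  fixes K :: "'a::euclidean_space set"
  assumes "compact K"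
  shows "compact {y \<bullet> (a - b) |a b. a \<in> K \<and> b \<in> K}"
proof -
  have "{y \<bullet> (a - b) |a b. a \<in> K \<and> b \<in> K} = (\<bullet>) y ` {a - b |a b. a \<in> K \<and> b \<in> K}"
    by blast
  also have "compact \<dots>"
    by (intro compact_continuous_image compact_differences assms continuous_intros)
  finally show ?thesis .
qed

lemma width_in_dir_ge:
  fixes K :: "'a::euclidean_space set"
  assumes "compact K" "a \<in> K" "b \<in> K"
  shows "y \<bullet> (a - b) \<le> width_in_dir K y"
  unfolding width_in_dir_def
  by (rule cSup_upper) (use assms bounded_imp_bdd_above[OF compact_imp_bounded[OF compact_inner_differences]] in auto)

lemma width_in_dir_attained:
  fixes K :: "'a::euclidean_space set"
  assumes "compact K" "K \<noteq> {}"
  obtains a b where "a \<in> K" "b \<in> K" "width_in_dir K y = y \<bullet> (a - b)"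
proof -
  let ?S = "{y \<bullet> (a - b) |a b. a \<in> K \<and> b \<in> K}"
  have "Sup ?S \<in> ?S"
    using compact_inner_differences[OF assms(1), of y] assms(2)
    by (intro closed_contains_Sup) (auto intro: bounded_imp_bdd_above compact_imp_bounded compact_imp_closed)
  then show ?thesis using that unfolding width_in_dir_def by blast
qed

lemma width_in_dir_nonneg:
  fixes K :: "'a::euclidean_space set"
  assumes "compact K" "K \<noteq> {}"
  shows "0 \<le> width_in_dir K y"
  using width_in_dir_ge[OF assms(1)] assms(2) by fastforce

lemma width_in_dir_mono:
  fixes K :: "'a::euclidean_space set"
  assumes "compact K" "compact K'" "K' \<noteq> {}" "K' \<subseteq> K"
  shows "width_in_dir K' y \<le> width_in_dir K y"
proof -
  obtain a b where "a \<in> K'" "b \<in> K'" "width_in_dir K' y = y \<bullet> (a - b)"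
    using width_in_dir_attained[OF assms(2,3)] .
  then show ?thesis
    using width_in_dir_ge[OF assms(1)] assms(4) by auto
qed

lemma width_in_dir_uminus [simp]: "width_in_dir K (-y) = width_in_dir K y"
proof -
  have "{(-y) \<bullet> (a - b) |a b. a \<in> K \<and> b \<in> K} = {y \<bullet> (b - a) |a b. a \<in> K \<and> b \<in> K}"
    by (simp add: inner_diff_right)
  also have "\<dots> = {y \<bullet> (a - b) |a b. a \<in> K \<and> b \<in> K}"
    by (rule Collect_cong) blast
  finally show ?thesis by (simp add: width_in_dir_def)
qed

lemma width_in_dir_ball_le:
  fixes C :: "'a::euclidean_space set"
  assumes "compact C" "0 < r" "ball c r \<subseteq> C"
  shows "r * norm y \<le> width_in_dir C y"
proof (cases "y = 0")
  case True
  have "C \<noteq> {}" using assms(2,3) centre_in_ball by blast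
  with True show ?thesis using width_in_dir_nonneg[OF assms(1)] by simp
next
  case False
  define v where "v = (r / (2 * norm y)) *\<^sub>R y"
  have "norm v = r / 2" using False assms(2) by (simp add: v_def)
  then have "c + v \<in> C" "c - v \<in> C"
    using assms(2,3) by (auto simp: dist_norm subset_iff)
  then have "y \<bullet> ((c + v) - (c - v)) \<le> width_in_dir C y"
    by (rule width_in_dir_ge[OF assms(1)])
  moreover have "y \<bullet> ((c + v) - (c - v)) = r * norm y"
    using False by (simp add: v_def inner_add_right power2_norm_eq_inner [symmetric] power2_eq_square)
  ultimately show ?thesis by simp
qed

lemma width_in_dir_homothetic_le:
  fixes K :: "'a::euclidean_space set"
  assumes "compact K" "K \<noteq> {}" "compact K'" "\<And>x. x \<in> K \<Longrightarrow> c + \<mu> *\<^sub>R (x - c) \<in> K'"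
  shows "\<mu> * width_in_dir K y \<le> width_in_dir K' y"
proof -
  obtain a b where "a \<in> K" "b \<in> K" and wab: "width_in_dir K y = y \<bullet> (a - b)"
    using width_in_dir_attained[OF assms(1,2)] .
  then have "y \<bullet> ((c + \<mu> *\<^sub>R (a - c)) - (c + \<mu> *\<^sub>R (b - c))) \<le> width_in_dir K' y"
    by (intro width_in_dir_ge assms)
  then show ?thesis
    by (simp add: wab algebra_simps inner_diff_right)
qed

lemma width_in_dir_less_of_strict_max:
  fixes C :: "'a::euclidean_space set"
  assumes "compact C" "compact K" "K \<noteq> {}" "K \<subseteq> C" "p \<in> C" "p \<notin> K"
    and "\<And>x. x \<in> C - {p} \<Longrightarrow> y \<bullet> x < y \<bullet> p"
  shows "width_in_dir K y < width_in_dir C y"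
proof -
  obtain a b where "a \<in> K" "b \<in> K" and wab: "width_in_dir K y = y \<bullet> (a - b)"
    using width_in_dir_attained[OF assms(2,3)] .
  then have "y \<bullet> a < y \<bullet> p" "b \<in> C"
    using assms(4,6,7) by auto
  moreover have "y \<bullet> (p - b) \<le> width_in_dir C y"
    using width_in_dir_ge[OF assms(1,5)] \<open>b \<in> C\<close> by blast
  ultimately show ?thesis
    by (simp add: wab inner_diff_right)
qed

lemma width_in_dir_attained_avoiding:
  fixes C :: "'a::euclidean_space set"
  assumes "compact C"
    and "x \<in> C - {p}" "y \<bullet> p \<le> y \<bullet> x" and "x' \<in> C - {p}" "y \<bullet> x' \<le> y \<bullet> p"
  obtains a b where "a \<in> C - {p}" "b \<in> C - {p}" "width_in_dir C y = y \<bullet> (a - b)"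
proof -
  obtain a0 b0 where ab0: "a0 \<in> C" "b0 \<in> C" "width_in_dir C y = y \<bullet> (a0 - b0)"
    using width_in_dir_attained[OF assms(1)] assms(2) by blast
  define a where "a = (if a0 = p then x else a0)"
  define b where "b = (if b0 = p then x' else b0)"
  have "a \<in> C - {p}" "b \<in> C - {p}"
    using ab0 assms by (auto simp: a_def b_def)
  moreover have "width_in_dir C y \<le> y \<bullet> (a - b)"
    using ab0(3) assms(3,5) by (auto simp: a_def b_def inner_diff_right)
  moreover have "y \<bullet> (a - b) \<le> width_in_dir C y"
    using calculation(1,2) by (intro width_in_dir_ge[OF assms(1)]) auto
  ultimately show ?thesis
    using that order_antisym by blast
qed

lemma width_in_dir_witnesses_finite:
  assumes "finite Y" "\<And>y. y \<in> Y \<Longrightarrow> \<exists>a\<in>A. \<exists>b\<in>A. width_in_dir C y = y \<bullet> (a - b)"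
  obtains P where "finite P" "P \<subseteq> A" "\<And>y. y \<in> Y \<Longrightarrow> \<exists>a\<in>P. \<exists>b\<in>P. width_in_dir C y = y \<bullet> (a - b)"
proof -
  obtain a b where ab: "\<And>y. y \<in> Y \<Longrightarrow> a y \<in> A \<and> b y \<in> A \<and> width_in_dir C y = y \<bullet> (a y - b y)"
    using assms(2) by metis
  show ?thesis
  proof (rule that[of "a ` Y \<union> b ` Y"])
    show "\<exists>a'\<in>a ` Y \<union> b ` Y. \<exists>b'\<in>a ` Y \<union> b ` Y. width_in_dir C y = y \<bullet> (a' - b')"
      if "y \<in> Y" for y
      using ab[OF that] that by blast
  qed (use assms(1) ab in auto)
qed

section \<open>Dual lattice and lattice width\<close>

lemma dual_lattice_uminus: "y \<in> dual_lattice L \<Longrightarrow> -y \<in> dual_lattice L"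
  unfolding dual_lattice_def by auto

lemma finite_dual_lattice_ball:
  fixes L :: "'a::euclidean_space set"
  assumes "span L = UNIV"
  shows "finite {y \<in> dual_lattice L. norm y \<le> R}"
proof -
  obtain B where B: "B \<subseteq> L" "independent B" "L \<subseteq> span B"
    by (rule maximal_independent_subset)
  have "finite B"
    using independent_bound[OF B(2)] by blast
  have span_B: "span B = UNIV"
    using span_mono[OF B(3)] assms by (simp add: span_span top_unique)
  let ?S = "{y \<in> dual_lattice L. norm y \<le> R}"
  define coords where "coords y = (\<lambda>b\<in>B. \<lfloor>b \<bullet> y\<rfloor>)" for y
  define N where "N b = \<lceil>norm b * R\<rceil>" for b :: 'a
  have inner_int: "of_int \<lfloor>b \<bullet> y\<rfloor> = b \<bullet> y" if "b \<in> B" "y \<in> dual_lattice L" for b y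
    using that B(1) by (auto simp: dual_lattice_def elim!: Ints_cases)
  have "inj_on coords ?S"
  proof (rule inj_onI)
    fix y y' assume y: "y \<in> ?S" "y' \<in> ?S" and eq: "coords y = coords y'"
    have "b \<bullet> y = b \<bullet> y'" if "b \<in> B" for b
    proof -
      have "\<lfloor>b \<bullet> y\<rfloor> = \<lfloor>b \<bullet> y'\<rfloor>"
        using fun_cong[OF eq, of b] that by (simp add: coords_def)
      moreover have "of_int \<lfloor>b \<bullet> y\<rfloor> = b \<bullet> y" "of_int \<lfloor>b \<bullet> y'\<rfloor> = b \<bullet> y'"
        using inner_int[OF that] y by auto
      ultimately show ?thesis
        by metis
    qed
    then show "y = y'"
      using vector_eq_dot_span[of y B y'] span_B by simp
  qed
  moreover have "coords y \<in> (\<Pi>\<^sub>E b\<in>B. {-N b..N b})" if "y \<in> ?S" for y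
  proof (rule PiE_I)
    fix b assume "b \<in> B"
    have "\<bar>b \<bullet> y\<bar> \<le> norm b * norm y" by (rule Cauchy_Schwarz_ineq2)
    also have "\<dots> \<le> norm b * R" using that by (simp add: mult_left_mono)
    finally have lo: "- (norm b * R) \<le> b \<bullet> y" and hi: "b \<bullet> y \<le> norm b * R"
      by auto
    have "- N b \<le> \<lfloor>b \<bullet> y\<rfloor>"
      unfolding N_def le_floor_iff of_int_minus using lo le_of_int_ceiling[of "norm b * R"] by linarith
    moreover have "\<lfloor>b \<bullet> y\<rfloor> \<le> N b"
      unfolding N_def using floor_mono[OF hi] floor_le_ceiling[of "norm b * R"] by linarith
    ultimately show "coords y b \<in> {-N b..N b}"
      using \<open>b \<in> B\<close> by (simp add: coords_def)
  qed (simp add: coords_def)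
  then have "coords ` ?S \<subseteq> (\<Pi>\<^sub>E b\<in>B. {-N b..N b})"
    by blast
  then have "finite (coords ` ?S)"
    by (rule finite_subset) (simp add: \<open>finite B\<close> finite_PiE)
  ultimately show ?thesis
    by (rule finite_imageD[rotated])
qed

lemma lattice_width_le:
  fixes K :: "'a::euclidean_space set"
  assumes "compact K" "K \<noteq> {}" "y \<in> dual_lattice L - {0}"
  shows "lattice_width L K \<le> width_in_dir K y"
  unfolding lattice_width_def
proof (rule cInf_lower)
  show "bdd_below (width_in_dir K ` (dual_lattice L - {0}))"
    using width_in_dir_nonneg[OF assms(1,2)] by (auto intro: bdd_belowI[of _ 0])
qed (use assms(3) in simp)

lemma lattice_width_eqI:
  assumes "y \<in> dual_lattice L - {0}" "width_in_dir K y = m"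
    and "\<And>z. z \<in> dual_lattice L - {0} \<Longrightarrow> m \<le> width_in_dir K z"
  shows "lattice_width L K = m"
  unfolding lattice_width_def by (rule cInf_eq_minimum) (use assms in auto)

lemma finite_dual_lattice_width_le:
  fixes C L :: "'a::euclidean_space set"
  assumes "compact C" "interior C \<noteq> {}" "span L = UNIV"
  shows "finite {y \<in> dual_lattice L. width_in_dir C y \<le> w}"
proof -
  obtain c r where "0 < r" "ball c r \<subseteq> C"
    using assms(2) mem_interior by blast
  then have "norm y \<le> w / r" if "width_in_dir C y \<le> w" for y
    using width_in_dir_ball_le[OF assms(1), of r c y] that by (simp add: pos_le_divide_eq mult.commute)
  then have "{y \<in> dual_lattice L. width_in_dir C y \<le> w} \<subseteq> {y \<in> dual_lattice L. norm y \<le> w / r}"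
    by blast
  then show ?thesis
    using finite_dual_lattice_ball[OF assms(3)] finite_subset by blast
qed

lemma width_direction_exists:
  fixes C L :: "'a::euclidean_space set"
  assumes "compact C" "interior C \<noteq> {}" "span L = UNIV" "dual_lattice L - {0} \<noteq> {}"
  obtains y where "width_direction L C y"
proof -
  obtain y0 where y0: "y0 \<in> dual_lattice L - {0}"
    using assms(4) by blast
  define S where "S = {y \<in> dual_lattice L. width_in_dir C y \<le> width_in_dir C y0} - {0}"
  have "finite S" "y0 \<in> S"
    using finite_dual_lattice_width_le[OF assms(1-3)] y0 by (auto simp: S_def)
  then have "Min (width_in_dir C ` S) \<in> width_in_dir C ` S"
    by (intro Min_in) auto
  then obtain y1 where "y1 \<in> S" and y1: "width_in_dir C y1 = Min (width_in_dir C ` S)"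
    by auto
  have "width_in_dir C y1 \<le> width_in_dir C y" if "y \<in> dual_lattice L - {0}" for y
  proof (cases "y \<in> S")
    case True
    then show ?thesis using y1 \<open>finite S\<close> by simp
  next
    case False
    then have "width_in_dir C y0 < width_in_dir C y" using that by (auto simp: S_def)
    moreover have "width_in_dir C y1 \<le> width_in_dir C y0" using y1 \<open>finite S\<close> \<open>y0 \<in> S\<close> by simp
    ultimately show ?thesis by simp
  qed
  then have "lattice_width L C = width_in_dir C y1"
    using \<open>y1 \<in> S\<close> by (intro lattice_width_eqI) (auto simp: S_def)
  then show ?thesis
    using that \<open>y1 \<in> S\<close> by (auto simp: width_direction_def S_def)
qed

lemma finite_width_directions:
  fixes C L :: "'a::euclidean_space set"
  assumes "compact C" "interior C \<noteq> {}" "span L = UNIV"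
  shows "finite {y. width_direction L C y}"
  using finite_dual_lattice_width_le[OF assms, of "lattice_width L C"]
  by (rule finite_subset[rotated]) (auto simp: width_direction_def)

lemma width_direction_gap:
  fixes C L :: "'a::euclidean_space set"
  assumes "compact C" "interior C \<noteq> {}" "span L = UNIV"
  obtains w where "lattice_width L C < w"
    and "\<And>y. y \<in> dual_lattice L - {0} \<Longrightarrow> \<not> width_direction L C y \<Longrightarrow> w \<le> width_in_dir C y"
proof -
  let ?m = "lattice_width L C"
  define V where "V = width_in_dir C ` ({y \<in> dual_lattice L. width_in_dir C y \<le> ?m + 1} - {0}
    - {y. width_direction L C y})"
  define w where "w = Min (insert (?m + 1) V)"
  have "finite V"
    using finite_dual_lattice_width_le[OF assms] by (simp add: V_def)
  have "C \<noteq> {}"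
    using assms(2) interior_subset by blast
  have "?m < v" if "v \<in> V" for v
    using that lattice_width_le[OF assms(1) \<open>C \<noteq> {}\<close>] by (force simp: V_def width_direction_def)
  then have "?m < w"
    using \<open>finite V\<close> by (simp add: w_def)
  moreover have "w \<le> width_in_dir C y"
    if "y \<in> dual_lattice L - {0}" "\<not> width_direction L C y" for y
  proof (cases "width_in_dir C y \<le> ?m + 1")
    case True
    then have "width_in_dir C y \<in> V" using that by (auto simp: V_def)
    then show ?thesis using \<open>finite V\<close> by (simp add: w_def)
  next
    case False
    have "w \<le> ?m + 1" using \<open>finite V\<close> by (simp add: w_def)
    with False show ?thesis by linarith
  qed
  ultimately show ?thesis using that by blast
qed

lemma width_direction_uminus: "width_direction L C y \<Longrightarrow> width_direction L C (-y)"
  by (simp add: width_direction_def dual_lattice_uminus)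

lemma lattice_width_pos:
  fixes C L :: "'a::euclidean_space set"
  assumes "compact C" "interior C \<noteq> {}" "width_direction L C y"
  shows "0 < lattice_width L C"
proof -
  obtain c r where "0 < r" "ball c r \<subseteq> C"
    using assms(2) mem_interior by blast
  then have "r * norm y \<le> width_in_dir C y"
    by (rule width_in_dir_ball_le[OF assms(1)])
  moreover have "0 < r * norm y"
    using \<open>0 < r\<close> assms(3) by (simp add: width_direction_def)
  ultimately show ?thesis
    using assms(3) by (simp add: width_direction_def)
qed

section \<open>Exposed points and caps\<close>

lemma farthest_point_exposed:
  fixes C :: "'a::euclidean_space set"
  assumes "convex C" "p \<in> C" "\<And>x. x \<in> C \<Longrightarrow> dist z x \<le> dist z p"
  shows "{p} exposed_face_of C"
proof -
  define a where "a = p - z"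
  have key: "a \<bullet> (x - p) \<le> - (norm (x - p))\<^sup>2 / 2" if "x \<in> C" for x
  proof -
    have "norm (a + (x - p)) \<le> norm a"
      using assms(3)[OF that] by (simp add: a_def dist_norm norm_minus_commute)
    then have "(norm (a + (x - p)))\<^sup>2 \<le> (norm a)\<^sup>2"
      by (simp add: power_mono)
    then show ?thesis
      unfolding dot_norm[of a] by simp
  qed
  have "a \<bullet> x \<le> a \<bullet> p" if "x \<in> C" for x
    using key[OF that] zero_le_power2[of "norm (x - p)"] unfolding inner_diff_right by linarith
  then have "(C \<inter> {x. a \<bullet> x = a \<bullet> p}) exposed_face_of C"
    by (intro exposed_face_of_Int_supporting_hyperplane_le assms(1))
  moreover have "C \<inter> {x. a \<bullet> x = a \<bullet> p} = {p}"
  proof -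
    have "x = p" if "x \<in> C" "a \<bullet> x = a \<bullet> p" for x
      using key[OF that(1)] that(2) by (simp add: inner_diff_right)
    then show ?thesis using assms(2) by blast
  qed
  ultimately show ?thesis by simp
qed

lemma exposed_point_notin:
  fixes C K :: "'a::euclidean_space set"
  assumes "compact C" "convex C" "closed K" "convex K" "q \<in> C" "q \<notin> K"
  obtains p where "{p} exposed_face_of C" "p \<notin> K"
proof -
  obtain a b where "a \<bullet> q < b" and K: "\<And>x. x \<in> K \<Longrightarrow> b < a \<bullet> x"
    using separating_hyperplane_closed_point[OF assms(4,3,6)] by blast
  \<comment> \<open>\<open>z\<close> lies so far beyond the hyperplane that all of \<open>K\<close> is strictly closer to \<open>z\<close> than \<open>q\<close> is.\<close>
  define g where "g = b - a \<bullet> q"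
  define t where "t = ((diameter C)\<^sup>2 + 1) / (2 * g)"
  define z where "z = q + t *\<^sub>R a"
  have "g > 0"
    using \<open>a \<bullet> q < b\<close> by (simp add: g_def)
  then have "t > 0" and t: "2 * t * g = (diameter C)\<^sup>2 + 1"
    by (simp_all add: t_def add_nonneg_pos)
  have "continuous_on C (dist z)"
    by (intro continuous_intros)
  then obtain p where "p \<in> C" and far: "\<And>x. x \<in> C \<Longrightarrow> dist z x \<le> dist z p"
    using continuous_attains_sup[OF assms(1)] assms(5) by blast
  have "p \<notin> K"
  proof
    assume "p \<in> K"
    have "(dist p q)\<^sup>2 \<le> (diameter C)\<^sup>2"
      using diameter_bounded_bound[OF compact_imp_bounded[OF assms(1)] \<open>p \<in> C\<close> assms(5)]
      by (simp add: power_mono)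
    moreover have "(diameter C)\<^sup>2 + 1 < 2 * t * (a \<bullet> (p - q))"
    proof -
      have "g < a \<bullet> (p - q)"
        using K[OF \<open>p \<in> K\<close>] by (simp add: g_def inner_diff_right)
      then have "2 * t * g < 2 * t * (a \<bullet> (p - q))"
        using \<open>t > 0\<close> by simp
      then show ?thesis by (simp add: t)
    qed
    moreover have "(dist z p)\<^sup>2 = (dist p q)\<^sup>2 - 2 * t * (a \<bullet> (p - q)) + (dist z q)\<^sup>2"
    proof -
      have dists: "dist z p = norm (t *\<^sub>R a - (p - q))" "dist z q = norm (t *\<^sub>R a)"
        "dist p q = norm (p - q)"
        by (simp_all add: z_def dist_norm algebra_simps)
      show ?thesis
        unfolding dists using dot_norm_neg[of "t *\<^sub>R a" "p - q"] by simp
    qed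
    moreover have "(dist z q)\<^sup>2 \<le> (dist z p)\<^sup>2"
      using far[OF assms(5)] by (simp add: power_mono)
    ultimately show False
      by linarith
  qed
  then show ?thesis
    using that farthest_point_exposed[OF assms(2) \<open>p \<in> C\<close> far] by blast
qed

lemma exposed_point_notin_interior:
  fixes C :: "'a::euclidean_space set"
  assumes "{p} exposed_face_of C" "interior C \<noteq> {}"
  shows "p \<notin> interior C"
proof -
  have "{p} face_of C" "{p} \<noteq> C"
    using assms exposed_face_of_def by auto
  then have "{p} \<inter> rel_interior C = {}"
    by (rule face_of_disjoint_rel_interior)
  then show ?thesis
    using rel_interior_nonempty_interior[OF assms(2)] by blast
qed

lemma homothety_into_halfspace:
  fixes C :: "'a::euclidean_space set"
  assumes "convex C" "c \<in> C" "x \<in> C" "C \<subseteq> {x. u \<bullet> x \<le> \<beta>}" "0 \<le> \<mu>" "\<mu> \<le> 1"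
  shows "c + \<mu> *\<^sub>R (x - c) \<in> C \<inter> {x. u \<bullet> x \<le> \<beta> - (1 - \<mu>) * (\<beta> - u \<bullet> c)}"
proof -
  have eq: "c + \<mu> *\<^sub>R (x - c) = (1 - \<mu>) *\<^sub>R c + \<mu> *\<^sub>R x"
    by (simp add: algebra_simps)
  have "u \<bullet> x \<le> \<beta>"
    using assms(3,4) by blast
  then have "\<mu> * (u \<bullet> x) \<le> \<mu> * \<beta>"
    using assms(5) by (rule mult_left_mono)
  then have "u \<bullet> ((1 - \<mu>) *\<^sub>R c + \<mu> *\<^sub>R x) \<le> \<beta> - (1 - \<mu>) * (\<beta> - u \<bullet> c)"
    by (simp add: inner_add_right algebra_simps)
  moreover have "(1 - \<mu>) *\<^sub>R c + \<mu> *\<^sub>R x \<in> C"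
    using assms by (intro convexD[OF assms(1)]) auto
  ultimately show ?thesis
    unfolding eq by simp
qed

lemma ball_subset_homothetic_image:
  fixes C C' :: "'a::real_normed_vector set"
  assumes "ball c r \<subseteq> C" "0 < \<mu>" "\<And>x. x \<in> C \<Longrightarrow> c + \<mu> *\<^sub>R (x - c) \<in> C'"
  shows "ball c (\<mu> * r) \<subseteq> C'"
proof
  fix x assume "x \<in> ball c (\<mu> * r)"
  have "dist c (c + (1 / \<mu>) *\<^sub>R (x - c)) = dist c x / \<mu>"
    using assms(2) by (simp add: dist_norm norm_minus_commute)
  also have "\<dots> < r"
    using \<open>x \<in> ball c (\<mu> * r)\<close> assms(2) by (simp add: pos_divide_less_eq mult.commute)
  finally have "c + (1 / \<mu>) *\<^sub>R (x - c) \<in> C"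
    using assms(1) by auto
  then have "c + \<mu> *\<^sub>R ((c + (1 / \<mu>) *\<^sub>R (x - c)) - c) \<in> C'"
    by (rule assms(3))
  then show "x \<in> C'"
    using assms(2) by simp
qed

lemma exposed_point_cap:
  fixes C :: "'a::euclidean_space set"
  assumes "convex_body C" "{p} exposed_face_of C" "finite P" "P \<subseteq> C - {p}" "0 < \<mu>" "\<mu> < 1"
  obtains C' c where "convex_body C'" "C' \<subset> C" "P \<subseteq> C'"
    "\<And>x. x \<in> C \<Longrightarrow> c + \<mu> *\<^sub>R (x - c) \<in> C'"
proof -
  have C: "compact C" "convex C" "interior C \<noteq> {}"
    using assms(1) by (auto simp: convex_body_def)
  obtain u \<beta> where u: "C \<subseteq> {x. u \<bullet> x \<le> \<beta>}" "{p} = C \<inter> {x. u \<bullet> x = \<beta>}"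
    using assms(2) by (auto simp: exposed_face_of_def)
  then have below: "u \<bullet> x < \<beta>" if "x \<in> C - {p}" for x
    using that by fastforce
  obtain c where c: "c \<in> interior C"
    using C(3) by blast
  then obtain r where "0 < r" "ball c r \<subseteq> C"
    using mem_interior by blast
  have "c \<in> C - {p}"
    using c interior_subset exposed_point_notin_interior[OF assms(2) C(3)] by blast
  define \<epsilon> where "\<epsilon> = Min (insert ((1 - \<mu>) * (\<beta> - u \<bullet> c)) ((\<lambda>x. \<beta> - u \<bullet> x) ` P))"
  have "0 < \<epsilon>"
    using below \<open>c \<in> C - {p}\<close> assms(3,4,6) by (auto simp: \<epsilon>_def)
  define C' where "C' = C \<inter> {x. u \<bullet> x \<le> \<beta> - \<epsilon>}"
  have hom: "c + \<mu> *\<^sub>R (x - c) \<in> C'" if "x \<in> C" for x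
  proof -
    have "\<epsilon> \<le> (1 - \<mu>) * (\<beta> - u \<bullet> c)"
      using assms(3) by (simp add: \<epsilon>_def)
    then show ?thesis
      using homothety_into_halfspace[OF C(2) _ that u(1), of c \<mu>] \<open>c \<in> C - {p}\<close> assms(5,6)
      by (auto simp: C'_def)
  qed
  have "ball c (\<mu> * r) \<subseteq> interior C'"
    using ball_subset_homothetic_image[OF \<open>ball c r \<subseteq> C\<close> assms(5) hom]
    by (simp add: interior_maximal)
  then have "interior C' \<noteq> {}"
    using \<open>0 < r\<close> assms(5) centre_in_ball[of c "\<mu> * r"] mult_pos_pos by blast
  then have "convex_body C'"
    unfolding convex_body_def C'_def
    using C by (intro conjI compact_Int_closed closed_halfspace_le convex_Int convex_halfspace_le) auto
  moreover have "C' \<subset> C"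
  proof -
    have "p \<in> C" "p \<notin> C'"
      using u(2) \<open>0 < \<epsilon>\<close> by (auto simp: C'_def)
    then show ?thesis
      by (auto simp: C'_def)
  qed
  moreover have "P \<subseteq> C'"
  proof
    fix x assume "x \<in> P"
    then have "\<epsilon> \<le> \<beta> - u \<bullet> x"
      using assms(3) by (simp add: \<epsilon>_def)
    then show "x \<in> C'"
      using \<open>x \<in> P\<close> assms(4) by (auto simp: C'_def)
  qed
  ultimately show ?thesis
    using that hom by blast
qed

section \<open>Lattice reduced bodies\<close>

lemma width_direction_attained_avoiding:
  fixes C L :: "'a::euclidean_space set"
  assumes "compact C"
    and no_strict: "\<And>y. width_direction L C y \<Longrightarrow> \<exists>x\<in>C - {p}. y \<bullet> p \<le> y \<bullet> x"
    and y: "width_direction L C y"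
  shows "\<exists>a\<in>C - {p}. \<exists>b\<in>C - {p}. width_in_dir C y = y \<bullet> (a - b)"
proof -
  obtain x where "x \<in> C - {p}" "y \<bullet> p \<le> y \<bullet> x"
    using no_strict[OF y] by blast
  moreover obtain x' where "x' \<in> C - {p}" "y \<bullet> x' \<le> y \<bullet> p"
    using no_strict[OF width_direction_uminus[OF y]] by auto
  ultimately obtain a b where "a \<in> C - {p}" "b \<in> C - {p}" "width_in_dir C y = y \<bullet> (a - b)"
    by (rule width_in_dir_attained_avoiding[OF assms(1)])
  then show ?thesis
    by blast
qed

lemma lattice_width_eq_of_subset:
  fixes C K L :: "'a::euclidean_space set"
  assumes "compact C" "C \<noteq> {}" "compact K" "K \<noteq> {}" "K \<subseteq> C" "width_direction L C y"
    and "\<And>z. z \<in> dual_lattice L - {0} \<Longrightarrow> lattice_width L C \<le> width_in_dir K z"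
  shows "lattice_width L K = lattice_width L C"
proof (rule lattice_width_eqI)
  show "y \<in> dual_lattice L - {0}"
    using assms(6) by (simp add: width_direction_def)
  then show "width_in_dir K y = lattice_width L C"
    using width_in_dir_mono[OF assms(1,3,4,5), of y] assms(6,7)
    by (simp add: width_direction_def order_antisym)
qed (rule assms(7))

lemma width_preserving_cap:
  fixes C L :: "'a::euclidean_space set"
  assumes "convex_body C" "span L = UNIV" "{p} exposed_face_of C"
    and no_strict: "\<And>y. width_direction L C y \<Longrightarrow> \<exists>x\<in>C - {p}. y \<bullet> p \<le> y \<bullet> x"
  obtains C' where "convex_body C'" "C' \<subset> C" "lattice_width L C' = lattice_width L C"
proof (cases "dual_lattice L - {0} = {}")
  case True
  obtain C' where "convex_body C'" "C' \<subset> C"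
    by (rule exposed_point_cap[OF assms(1,3), of "{}" "1/2"]) auto
  then show ?thesis
    using that True by (simp add: lattice_width_def)
next
  case False
  have C: "compact C" "interior C \<noteq> {}"
    using assms(1) by (auto simp: convex_body_def)
  let ?m = "lattice_width L C"
  obtain y1 where y1: "width_direction L C y1"
    using width_direction_exists[OF C assms(2) False] .
  obtain w where "?m < w"
    and gap: "\<And>y. y \<in> dual_lattice L - {0} \<Longrightarrow> \<not> width_direction L C y \<Longrightarrow> w \<le> width_in_dir C y"
    by (rule width_direction_gap[OF C assms(2)]) blast
  have "0 < ?m"
    using lattice_width_pos[OF C y1] .
  obtain P where "finite P" "P \<subseteq> C - {p}"
    and P: "\<And>y. width_direction L C y \<Longrightarrow> \<exists>a\<in>P. \<exists>b\<in>P. width_in_dir C y = y \<bullet> (a - b)"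
    using width_direction_attained_avoiding[OF C(1) no_strict]
    by (rule width_in_dir_witnesses_finite[OF finite_width_directions[OF C assms(2)]]) auto
  \<comment> \<open>The cap keeps the witness pairs of all width directions; in every other direction
    it is at least \<open>m / w\<close> times as wide as \<open>C\<close>, hence at least \<open>m\<close> wide.\<close>
  have "0 < ?m / w" "?m / w < 1"
    using \<open>0 < ?m\<close> \<open>?m < w\<close> by simp_all
  then obtain C' c where C': "convex_body C'" "C' \<subset> C" "P \<subseteq> C'"
    and hom: "\<And>x. x \<in> C \<Longrightarrow> c + (?m / w) *\<^sub>R (x - c) \<in> C'"
    by (rule exposed_point_cap[OF assms(1,3) \<open>finite P\<close> \<open>P \<subseteq> C - {p}\<close>]) blast
  have C'c: "compact C'" "C' \<noteq> {}"
    using C'(1) interior_subset by (auto simp: convex_body_def)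
  have "?m \<le> width_in_dir C' y" if "y \<in> dual_lattice L - {0}" for y
  proof (cases "width_direction L C y")
    case True
    then obtain a b where "a \<in> C'" "b \<in> C'" "width_in_dir C y = y \<bullet> (a - b)"
      using P C'(3) by blast
    then show ?thesis
      using True width_in_dir_ge[OF C'c(1) \<open>a \<in> C'\<close> \<open>b \<in> C'\<close>, of y] by (simp add: width_direction_def)
  next
    case False
    have "?m = (?m / w) * w"
      using \<open>0 < ?m\<close> \<open>?m < w\<close> by simp
    also have "\<dots> \<le> (?m / w) * width_in_dir C y"
      using gap[OF that False] \<open>0 < ?m / w\<close> by (intro mult_left_mono) auto
    also have "\<dots> \<le> width_in_dir C' y"
      using hom C(1) C'c(1) C(2) interior_subset by (intro width_in_dir_homothetic_le) auto
    finally show ?thesis .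
  qed
  then have "lattice_width L C' = ?m"
    using lattice_width_eq_of_subset[OF C(1) _ C'c psubset_imp_subset[OF C'(2)] y1] C(2)
      interior_subset by blast
  then show ?thesis
    using that C' by blast
qed

lemma lattice_reduced_imp_strict_width_direction:
  fixes C L :: "'a::euclidean_space set"
  assumes "convex_body C" "span L = UNIV" "lattice_reduced L C" "{p} exposed_face_of C"
  shows "\<exists>y. width_direction L C y \<and> (\<forall>x\<in>C - {p}. y \<bullet> x < y \<bullet> p)"
proof (rule ccontr)
  assume "\<not> ?thesis"
  then have "\<exists>x\<in>C - {p}. y \<bullet> p \<le> y \<bullet> x" if "width_direction L C y" for y
    using that by (auto simp: not_less)
  then obtain C' where "convex_body C'" "C' \<subset> C" "lattice_width L C' = lattice_width L C"
    using width_preserving_cap[OF assms(1,2,4)] by blast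
  then show False
    using assms(3) by (auto simp: lattice_reduced_def)
qed

lemma strict_width_directions_imp_lattice_reduced:
  fixes C L :: "'a::euclidean_space set"
  assumes "convex_body C"
    and strict: "\<And>p. {p} exposed_face_of C \<Longrightarrow> \<exists>y. width_direction L C y \<and> (\<forall>x\<in>C - {p}. y \<bullet> x < y \<bullet> p)"
  shows "lattice_reduced L C"
  unfolding lattice_reduced_def
proof
  assume "\<exists>C'. convex_body C' \<and> C' \<subset> C \<and> lattice_width L C' = lattice_width L C"
  then obtain C' where C': "convex_body C'" "C' \<subset> C" "lattice_width L C' = lattice_width L C"
    by blast
  have C: "compact C" "convex C" and C'c: "compact C'" "convex C'" "C' \<noteq> {}"
    using assms(1) C'(1) interior_subset by (auto simp: convex_body_def)
  obtain q where "q \<in> C" "q \<notin> C'"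
    using C'(2) by blast
  then obtain p where p: "{p} exposed_face_of C" "p \<notin> C'"
    using exposed_point_notin[OF C compact_imp_closed[OF C'c(1)] C'c(2)] by blast
  then have "p \<in> C"
    using exposed_face_of_def face_of_imp_subset by blast
  obtain y where y: "width_direction L C y" "\<And>x. x \<in> C - {p} \<Longrightarrow> y \<bullet> x < y \<bullet> p"
    using strict[OF p(1)] by blast
  have "lattice_width L C' \<le> width_in_dir C' y"
    using lattice_width_le[OF C'c(1,3)] y(1) by (simp add: width_direction_def)
  also have "\<dots> < width_in_dir C y"
    using width_in_dir_less_of_strict_max[OF C(1) C'c(1,3) _ \<open>p \<in> C\<close> p(2) y(2)] C'(2) by blast
  also have "\<dots> = lattice_width L C"
    using y(1) by (simp add: width_direction_def)
  finally show False
    using C'(3) by simp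
qed

theorem proposition3p1:
  fixes C L :: "'a::euclidean_space set"
  assumes "convex_body C" and "is_lattice L"
  shows "lattice_reduced L C \<longleftrightarrow>
    (\<forall>p. {p} exposed_face_of C \<longrightarrow>
       (\<exists>y. width_direction L C y \<and> (\<forall>x\<in>C - {p}. y \<bullet> p > y \<bullet> x)))"
proof
  assume "lattice_reduced L C"
  moreover have "span L = UNIV"
    using assms(2) by (simp add: is_lattice_def)
  ultimately show "\<forall>p. {p} exposed_face_of C \<longrightarrow>
      (\<exists>y. width_direction L C y \<and> (\<forall>x\<in>C - {p}. y \<bullet> p > y \<bullet> x))"
    using lattice_reduced_imp_strict_width_direction[OF assms(1)] by blast
next
  assume "\<forall>p. {p} exposed_face_of C \<longrightarrow>
      (\<exists>y. width_direction L C y \<and> (\<forall>x\<in>C - {p}. y \<bullet> p > y \<bullet> x))"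
  then show "lattice_reduced L C"
    using strict_width_directions_imp_lattice_reduced[OF assms(1)] by blast
qed

end
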